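(* Let $x=x_1\cdots x_n\in S_n$. If $x_i$ is a left-to-right minimum of $x$ and $x_i$ appears to the left of $x_j$ in $s_{132,321}(x)$, then $j<i$.
   Context: An entry $x_i$ is a left-to-right minimum of $x$ if it is smaller than every entry to its left. A permutation contains a pattern $p$ if it has a subsequence order-isomorphic to $p$; otherwise it avoids $p$. The map $s_{132,321}$ is defined as follows: the entries of the input permutation are read from left to right, with an initially empty stack. At each step, if the input is nonempty and pushing the next input entry onto the stack produces a stack whose contents, read from top to bottom, avoid both $132$ and $321$, that entry is pushed; otherwise the top entry of the stack is popped and appended to the output. When the input is exhausted, the remaining stack entries are popped one at a time to the output. $s_{132,321}(x)$ is the output word. *)

theory Defs
  imports Main
begin

definition contains_pat :: "nat list \<Rightarrow> nat list \<Rightarrow> bool" where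
  "contains_pat w p \<longleftrightarrow>
     (\<exists>idx :: nat \<Rightarrow> nat.
        (\<forall>a b. a < b \<and> b < length p \<longrightarrow> idx a < idx b) \<and>
        (\<forall>a. a < length p \<longrightarrow> idx a < length w) \<and>
        (\<forall>a b. a < length p \<and> b < length p \<longrightarrow>
                 (w ! idx a < w ! idx b \<longleftrightarrow> p ! a < p ! b)))"

definition avoids_pat :: "nat list \<Rightarrow> nat list \<Rightarrow> bool" where
  "avoids_pat w p \<longleftrightarrow> \<not> contains_pat w p"

(* The stack is a list whose head is the top; so the list itself is the stack
   contents read from top to bottom. *)
definition stack_ok :: "nat list \<Rightarrow> bool" where
  "stack_ok st \<longleftrightarrow> avoids_pat st [1,3,2] \<and> avoids_pat st [3,2,1]"

(* s_run input stack = remaining output produced from this configuration. *)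
function s_run :: "nat list \<Rightarrow> nat list \<Rightarrow> nat list" where
  "s_run [] st = st"
| "s_run (a # inp) st =
     (if stack_ok (a # st) then s_run inp (a # st)
      else (case st of [] \<Rightarrow> s_run inp [a] | b # st' \<Rightarrow> b # s_run (a # inp) st'))"
  by pat_completeness auto
termination
  by (relation "measure (\<lambda>(inp, st). 2 * length inp + length st)") auto

definition s132_321 :: "nat list \<Rightarrow> nat list" where
  "s132_321 x = s_run x []"

definition is_perm :: "nat \<Rightarrow> nat list \<Rightarrow> bool" where
  "is_perm n x \<longleftrightarrow> length x = n \<and> distinct x \<and> set x = {1..n}"

(* 0-based index i: x!i is a left-to-right minimum *)
definition ltr_min :: "nat list \<Rightarrow> nat \<Rightarrow> bool" where
  "ltr_min x i \<longleftrightarrow> i < length x \<and> (\<forall>k<i. x ! i < x ! k)"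

definition appears_left :: "nat list \<Rightarrow> nat \<Rightarrow> nat \<Rightarrow> bool" where
  "appears_left y u v \<longleftrightarrow> (\<exists>p q. p < q \<and> q < length y \<and> y ! p = u \<and> y ! q = v)"

end

theory Submission
  imports Defs
begin

(*
  Before x_i is read, the stack holds only entries to its left, all larger than x_i.
  Reading x_i pops some of them and then pushes x_i on top of a stack L.
  Since x_i is the minimum of x_i # L and this stack avoids 132, L is increasing from top
  to bottom. Both 132 and 321 end with a descent, which no entry pushed above an increasing
  stack can create; hence x_i # L stays at the bottom of the stack until the input is
  exhausted, and everything output after x_i comes from L, i.e. from the left of x_i.
*)

lemma s_run_push: "stack_ok (a # st) \<Longrightarrow> s_run (a # inp) st = s_run inp (a # st)"
  by simp

lemma s_run_pop:
  "\<not> stack_ok (a # b # st) \<Longrightarrow> s_run (a # inp) (b # st) = b # s_run (a # inp) st"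
  by simp

lemma s_run_empty_stack: "s_run (a # inp) [] = s_run inp [a]"
  by simp

(* The pop branch calls s_run again on the same input, so simp would keep unfolding it. *)
declare s_run.simps(2) [simp del]

lemma length_s_run: "length (s_run inp st) = length inp + length st"
  by (induction inp st rule: s_run.induct) (auto simp: s_run.simps split: list.splits)

lemma set_s_run: "set (s_run inp st) = set inp \<union> set st"
  by (induction inp st rule: s_run.induct) (auto simp: s_run.simps split: list.splits)

lemma distinct_s132_321:
  assumes "distinct x"
  shows "distinct (s132_321 x)"
proof (rule card_distinct)
  have "set (s132_321 x) = set x" "length (s132_321 x) = length x"
    by (simp_all add: s132_321_def set_s_run length_s_run)
  then show "card (set (s132_321 x)) = length (s132_321 x)"
    using distinct_card[OF assms] by simp
qed

lemma avoids_pat_Cons_sorted: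
  assumes "sorted L" and "length p = 3" and "p ! 2 < p ! 1"
  shows "avoids_pat (c # L) p"
  unfolding avoids_pat_def
proof
  assume "contains_pat (c # L) p"
  then obtain idx where mono: "\<forall>a b. a < b \<and> b < length p \<longrightarrow> idx a < idx b"
    and bound: "\<forall>a. a < length p \<longrightarrow> idx a < length (c # L)"
    and iso: "\<forall>a b. a < length p \<and> b < length p \<longrightarrow>
               ((c # L) ! idx a < (c # L) ! idx b \<longleftrightarrow> p ! a < p ! b)"
    unfolding contains_pat_def by blast
  have idx: "idx 0 < idx 1" "idx 1 < idx 2" "idx 2 < length (c # L)"
    using mono bound assms(2) by auto
  have descent: "(c # L) ! idx 2 < (c # L) ! idx 1"
    using iso assms(2,3) by auto
  obtain k1 k2 where k: "idx 1 = Suc k1" "idx 2 = Suc k2"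
    using idx by (cases "idx 1"; cases "idx 2") auto
  have "L ! k1 \<le> L ! k2"
    using assms(1) idx k by (simp add: sorted_iff_nth_mono)
  then show False
    using descent k by simp
qed

lemma stack_ok_Cons_sorted: "sorted L \<Longrightarrow> stack_ok (c # L)"
  unfolding stack_ok_def by (simp add: avoids_pat_Cons_sorted)

lemma sorted_if_avoids_132_Cons_min:
  assumes "avoids_pat (a # L) [1,3,2]" and "\<forall>c\<in>set L. a < c"
  shows "sorted L"
proof (rule ccontr)
  assume "\<not> sorted L"
  then obtain p q where pq: "p < q" "q < length L" "L ! q < L ! p"
    unfolding sorted_iff_nth_mono by (metis le_less not_le)
  define idx where "idx = (\<lambda>k::nat. if k = 0 then 0 else if k = 1 then Suc p else Suc q)"
  have "a < L ! p" "a < L ! q"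
    using assms(2) pq by auto
  have "contains_pat (a # L) [1,3,2]"
    unfolding contains_pat_def
  proof (intro exI[of _ idx] conjI allI impI)
    fix k l :: nat
    assume "k < l \<and> l < length [1::nat,3,2]"
    then show "idx k < idx l"
      using pq by (auto simp: idx_def)
  next
    fix k :: nat
    assume "k < length [1::nat,3,2]"
    then show "idx k < length (a # L)"
      using pq by (auto simp: idx_def)
  next
    fix k l :: nat
    assume "k < length [1::nat,3,2] \<and> l < length [1::nat,3,2]"
    then have "k \<in> {0,1,2}" "l \<in> {0,1,2}"
      by auto
    then show "((a # L) ! idx k < (a # L) ! idx l) = ([1::nat,3,2] ! k < [1,3,2] ! l)"
      using \<open>a < L ! p\<close> \<open>a < L ! q\<close> pq by (auto simp: idx_def)
  qed
  then show False
    using assms(1) unfolding avoids_pat_def by simp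
qed

lemma s_run_Cons_input:
  "\<exists>u st'. st = u @ st' \<and> s_run (a # inp) st = u @ s_run inp (a # st')
     \<and> (stack_ok (a # st') \<or> st' = [])"
proof (induction st)
  case Nil
  show ?case
    using s_run_empty_stack by auto
next
  case (Cons b st)
  show ?case
  proof (cases "stack_ok (a # b # st)")
    case True
    then show ?thesis
      using s_run_push by (intro exI[of _ "[]"] exI[of _ "b # st"]) simp
  next
    case False
    obtain u st' where "st = u @ st'" "s_run (a # inp) st = u @ s_run inp (a # st')"
      and "stack_ok (a # st') \<or> st' = []"
      using Cons.IH by blast
    then show ?thesis
      using s_run_pop[OF False] by (intro exI[of _ "b # u"] exI[of _ st']) simp
  qed
qed

lemma s_run_append_input:
  "\<exists>u st'. s_run (pre @ rest) st = u @ s_run rest st' \<and> set st' \<subseteq> set pre \<union> set st"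
proof (induction pre arbitrary: st)
  case Nil
  show ?case by (intro exI[of _ "[]"] exI[of _ st]) simp
next
  case (Cons a pre)
  obtain u st' where "st = u @ st'"
    and "s_run (a # pre @ rest) st = u @ s_run (pre @ rest) (a # st')"
    using s_run_Cons_input by blast
  moreover obtain v st'' where "s_run (pre @ rest) (a # st') = v @ s_run rest st''"
    and "set st'' \<subseteq> set pre \<union> set (a # st')"
    using Cons.IH by blast
  ultimately show ?case
    by (intro exI[of _ "u @ v"] exI[of _ st'']) auto
qed

lemma s_run_sorted_bottom:
  assumes "sorted L"
  shows "\<exists>w. s_run inp (upper @ L) = w @ L"
proof (induction inp arbitrary: upper)
  case Nil
  show ?case by simp
next
  case (Cons a inp)
  note IH = Cons.IH
  show ?case
  proof (induction upper)
    case Nil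
    show ?case
      using stack_ok_Cons_sorted[OF assms] s_run_push IH[of "[a]"] by auto
  next
    case (Cons b upper)
    then show ?case
      using s_run_push s_run_pop IH[of "a # b # upper"]
      by (cases "stack_ok (a # b # upper @ L)") (auto intro: exI[of _ "b # _"])
  qed
qed

lemma appears_left_distinct_imp_in_tail:
  assumes "distinct (z @ a # L)" and "appears_left (z @ a # L) a b"
  shows "b \<in> set L"
proof -
  let ?y = "z @ a # L"
  obtain p q where pq: "p < q" "q < length ?y" "?y ! p = a" "?y ! q = b"
    using assms(2) unfolding appears_left_def by blast
  have "?y ! length z = a" "length z < length ?y"
    by simp_all
  then have "p = length z"
    using pq assms(1) nth_eq_iff_index_eq[of ?y p "length z"] by simp
  then show ?thesis
    using pq by (auto simp: nth_append)
qed

lemma ltr_min_less_prefix: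
  assumes "ltr_min x i" and "c \<in> set (take i x)"
  shows "x ! i < c"
proof -
  obtain k where "k < length (take i x)" "c = take i x ! k"
    using assms(2) by (auto simp: in_set_conv_nth)
  then show ?thesis
    using assms(1) unfolding ltr_min_def by simp
qed

theorem lemma3p1:
  fixes n :: nat and x :: "nat list" and i j :: nat
  assumes "is_perm n x"
    and "i < n" and "j < n"
    and "ltr_min x i"
    and "appears_left (s132_321 x) (x ! i) (x ! j)"
  shows "j < i"
proof -
  have x: "length x = n" "distinct x"
    using assms(1) unfolding is_perm_def by auto
  have x_split: "x = take i x @ x ! i # drop (Suc i) x"
    using assms(2) x by (simp add: id_take_nth_drop)
  obtain u st where before: "s_run x [] = u @ s_run (x ! i # drop (Suc i) x) st"
    and st_prefix: "set st \<subseteq> set (take i x)"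
    using s_run_append_input[of "take i x" _ "[]"] x_split by (metis empty_set sup_bot_right)
  have larger: "\<forall>c\<in>set st. x ! i < c"
    using st_prefix assms(4) ltr_min_less_prefix by blast
  obtain v L where "st = v @ L"
    and read: "s_run (x ! i # drop (Suc i) x) st = v @ s_run (drop (Suc i) x) (x ! i # L)"
    and "stack_ok (x ! i # L) \<or> L = []"
    using s_run_Cons_input by blast
  then have "sorted (x ! i # L)"
    using larger sorted_if_avoids_132_Cons_min[of "x ! i" L]
    by (auto simp: stack_ok_def less_imp_le)
  then obtain w where after: "s_run (drop (Suc i) x) (x ! i # L) = w @ x ! i # L"
    using s_run_sorted_bottom[of _ _ "[]"] by fastforce
  have out: "s132_321 x = (u @ v @ w) @ x ! i # L"
    unfolding s132_321_def before read after by simp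
  have "x ! j \<in> set L"
    using appears_left_distinct_imp_in_tail distinct_s132_321[OF x(2)] assms(5)
    unfolding out by blast
  then have "x ! j \<in> set (take i x)"
    using \<open>st = v @ L\<close> st_prefix by auto
  then show "j < i"
    using x assms(3) by (auto simp: in_set_conv_nth nth_eq_iff_index_eq)
qed

end
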